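(* Let $c=\frac32\left((1+\sqrt2)^{1/3}-(1+\sqrt2)^{-1/3}\right)=0.8941\cdots$ and let $x$ be a real number with $-3<x<c$. (i) We have $$\sum_{k=1}^\infty\frac{((2x-3)^2k+2x^2+2x-3)x^{3k}}{(x-1)^k\binom{3k}k}=-2x^3\frac{x+7}{(x+3)^2}+\frac{8x^2(x-1)q(x)}{(x+3)^2\sqrt{(1-x)(3+x)}},$$ where $$q(x)=\begin{cases}\arctan\left(\frac x{x+2}\sqrt{\frac{3+x}{1-x}}\right)&\text{if}\ -2<x<1,\\ -\frac{\pi}2&\text{if}\ x=-2,\\ \arctan\left(\frac x{x+2}\sqrt{\frac{3+x}{1-x}}\right)-\pi&\text{if}\ -3<x<-2.\end{cases}$$ (ii) We have $$\sum_{k=0}^\infty\frac{(s(x)k+t(x))x^{3k}}{(x-1)^k\binom{3k}k}=12x^2(1-x)\log(1-x)-27(1-x)(x^2-6x+3),$$ where $$s(x)=(x+3)(2x-3)^2(x^2-12x+9)=4x^5-48x^4+9x^3+351x^2-567x+243$$ and $$t(x)=2x^5-48x^4+69x^3-189x^2+243x-81.$$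
   Context: $\arctan$ denotes the principal branch with values in $(-\pi/2,\pi/2)$; $\log$ is the natural logarithm. *)

theory Defs
  imports "HOL-Analysis.Analysis"
begin

definition c_const :: real where
  "c_const = 3/2 * ((1 + sqrt 2) powr (1/3) - (1 + sqrt 2) powr (-(1/3)))"

definition q_fun :: "real \<Rightarrow> real" where
  "q_fun x = (if -2 < x \<and> x < 1 then arctan (x / (x + 2) * sqrt ((3 + x) / (1 - x)))
              else if x = -2 then - pi / 2
              else arctan (x / (x + 2) * sqrt ((3 + x) / (1 - x))) - pi)"

definition s_fun :: "real \<Rightarrow> real" where
  "s_fun x = (x + 3) * (2*x - 3)^2 * (x^2 - 12*x + 9)"

definition t_fun :: "real \<Rightarrow> real" where
  "t_fun x = 2*x^5 - 48*x^4 + 69*x^3 - 189*x^2 + 243*x - 81"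

end

theory Submission
  imports Defs
begin

(* Euler's Beta integral gives 1 / binom(3k, k) = (3k + 1) * int_0^1 (t (1 - t)^2)^k dt, and
   max t (1 - t)^2 = 4/27 on [0, 1]. So for |u| < 27/4 the series sum_k (a k + b) u^k / binom(3k, k)
   is, by the Weierstrass M-test, the integral over [0, 1] of the closed form of
   sum_k (a k + b) (3k + 1) y^k at y = u t (1 - t)^2. For u = x^3 / (x - 1) the denominator 1 - y
   is, up to the factor x - 1, (1 - x + x t) (x^2 t^2 - x (x + 1) t + 1), and for the two pairs (a, b)
   of the theorem the integrand has an elementary antiderivative: a rational function plus the
   logarithms of these two factors, resp. plus an arctangent coming from the quadratic one.
   The hypothesis x < c is equivalent to |x^3 / (x - 1)| < 27/4 on (-3, 1), as c is the real root of
   4 c^3 + 27 c = 27; the three cases of q arise when the difference of the two boundary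
   arctangents is written as a single arctangent. *)

lemma tendsto_power2_times_power_zero:
  fixes y :: real
  assumes "\<bar>y\<bar> < 1"
  shows "(\<lambda>n. real n ^ 2 * y ^ n) \<longlonglongrightarrow> 0"
proof -
  define s where "s = sqrt \<bar>y\<bar>"
  have "norm s < 1" using assms by (simp add: s_def)
  then have "(\<lambda>n. real n * s ^ n) \<longlonglongrightarrow> 0" using powser_times_n_limit_0[of s] by simp
  then have "(\<lambda>n. (real n * s ^ n) * (real n * s ^ n)) \<longlonglongrightarrow> 0 * 0"
    by (intro tendsto_mult)
  moreover have "(real n * s ^ n) * (real n * s ^ n) = \<bar>real n ^ 2 * y ^ n\<bar>" for n
  proof -
    have "s ^ n * s ^ n = \<bar>y\<bar> ^ n"
      by (simp add: s_def power_mult_distrib[symmetric] flip: power_add mult_2)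
    then show ?thesis by (simp add: abs_mult power_abs power2_eq_square algebra_simps)
  qed
  ultimately show ?thesis by (simp add: tendsto_rabs_zero_iff)
qed

lemma sums_quadratic_times_power:
  fixes y a b c :: real
  assumes y: "\<bar>y\<bar> < 1"
  shows "(\<lambda>k. (a * real k ^ 2 + b * real k + c) * y ^ k) sums
           (a * y * (1 + y) / (1 - y) ^ 3 + b * y / (1 - y) ^ 2 + c / (1 - y))"
proof -
  have y1: "1 - y \<noteq> 0" using y by auto
  define A where "A = a / (1 - y)"
  define B where "B = (b + 2 * A * y) / (1 - y)"
  define C where "C = (c + y * (A + B)) / (1 - y)"
  \<comment> \<open>\<open>H\<close> is an antidifference of the summand, and it tends to zero.\<close>
  define H where "H n = (A * real n ^ 2 + B * real n + C) * y ^ n" for n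
  have "(\<lambda>n. A * (real n ^ 2 * y ^ n) + B * (real n * y ^ n) + C * y ^ n)
      \<longlonglongrightarrow> A * 0 + B * 0 + C * 0"
    using y by (intro tendsto_intros tendsto_power2_times_power_zero LIMSEQ_abs_realpow_zero2)
      (use powser_times_n_limit_0[of y] in simp_all)
  moreover have "H = (\<lambda>n. A * (real n ^ 2 * y ^ n) + B * (real n * y ^ n) + C * y ^ n)"
    by (simp add: H_def fun_eq_iff algebra_simps)
  ultimately have "H \<longlonglongrightarrow> 0" by simp
  moreover have "H n - H (Suc n) = (a * real n ^ 2 + b * real n + c) * y ^ n" for n
  proof -
    have "A * (1 - y) = a" "B * (1 - y) = b + 2 * A * y" "C * (1 - y) = c + y * (A + B)"
      using y1 by (simp_all add: A_def B_def C_def)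
    moreover have "H n - H (Suc n) = y ^ n * ((A * (1 - y)) * real n ^ 2
        + (B * (1 - y) - 2 * A * y) * real n + (C * (1 - y) - y * (A + B)))"
      by (simp add: H_def algebra_simps power2_eq_square)
    ultimately show ?thesis by simp
  qed
  ultimately have "(\<lambda>k. (a * real k ^ 2 + b * real k + c) * y ^ k) sums (H 0 - 0)"
    using telescope_sums' by fastforce
  moreover have "H 0 = a * y * (1 + y) / (1 - y) ^ 3 + b * y / (1 - y) ^ 2 + c / (1 - y)"
  proof -
    define z where "z = 1 - y"
    have y_eq: "y = 1 - z" and "z \<noteq> 0" using y1 by (simp_all add: z_def)
    then show ?thesis
      unfolding H_def A_def B_def C_def z_def[symmetric] y_eq
      by (simp add: field_simps power2_eq_square power3_eq_cube)
  qed
  ultimately show ?thesis by simp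
qed

lemma has_integral_power_mult_power_01:
  "((\<lambda>t::real. t ^ m * (1 - t) ^ n) has_integral (fact m * fact n / fact (m + n + 1))) {0..1}"
proof -
  have "((\<lambda>t. t powr (real m + 1 - 1) * (1 - t) powr (real n + 1 - 1)) has_integral
          Beta (real m + 1) (real n + 1)) {0..1}"
    by (rule has_integral_Beta_real) auto
  moreover have "Beta (real m + 1) (real n + 1) = fact m * fact n / fact (m + n + 1)"
  proof -
    have "Gamma (real m + 1) = fact m" "Gamma (real n + 1) = fact n"
      "Gamma (real m + 1 + (real n + 1)) = fact (m + n + 1)"
      using Gamma_fact[of m] Gamma_fact[of n] Gamma_fact[of "m + n + 1"] by (simp_all add: add_ac)
    then show ?thesis by (simp add: Beta_def)
  qed
  ultimately have "((\<lambda>t. t powr real m * (1 - t) powr real n) has_integral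
          (fact m * fact n / fact (m + n + 1))) {0..1}" by simp
  then show ?thesis
    by (rule has_integral_spike_finite[where S = "{0, 1}", rotated 2])
      (auto simp: powr_realpow)
qed

lemma inverse_binomial_3k_has_integral:
  "((\<lambda>t::real. (3 * real k + 1) * (t * (1 - t) ^ 2) ^ k) has_integral
      1 / real ((3 * k) choose k)) {0..1}"
proof -
  have "(fact (k + 2 * k + 1) :: real) = (3 * real k + 1) * fact (3 * k)"
    by (simp add: fact_Suc[of "3 * k", simplified] algebra_simps)
  moreover have "real ((3 * k) choose k) = fact (3 * k) / (fact k * fact (2 * k))"
    using binomial_fact[of k "3 * k"] by (simp add: mult_2)
  ultimately have "fact k * fact (2 * k) / fact (k + 2 * k + 1)
      = 1 / ((3 * real k + 1) * real ((3 * k) choose k))"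
    by simp
  then have "((\<lambda>t::real. (3 * real k + 1) * (t ^ k * (1 - t) ^ (2 * k))) has_integral
      (3 * real k + 1) * (1 / ((3 * real k + 1) * real ((3 * k) choose k)))) {0..1}"
    using has_integral_power_mult_power_01[of k "2 * k"] by (intro has_integral_mult_right) simp
  then show ?thesis by (simp add: power_mult_distrib power_mult)
qed

lemma sums_integrals_of_dominated_series:
  fixes f :: "nat \<Rightarrow> real \<Rightarrow> real"
  assumes bound: "\<And>k t. t \<in> {a..b} \<Longrightarrow> \<bar>f k t\<bar> \<le> M k" and "summable M"
    and cont: "\<And>k. continuous_on {a..b} (f k)"
    and integral: "\<And>k. (f k has_integral I k) {a..b}"
    and integral_sum: "((\<lambda>t. \<Sum>k. f k t) has_integral J) {a..b}"
  shows "I sums J"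
proof -
  have "uniform_limit {a..b} (\<lambda>n t. \<Sum>k<n. f k t) (\<lambda>t. \<Sum>k. f k t) sequentially"
    using bound \<open>summable M\<close> by (intro Weierstrass_m_test) auto
  moreover have "continuous_on {a..b} (\<lambda>t. \<Sum>k<n. f k t)" for n
    using cont by (intro continuous_intros)
  ultimately obtain I' J' where I': "\<And>n. ((\<lambda>t. \<Sum>k<n. f k t) has_integral I' n) {a..b}"
    and J': "((\<lambda>t. \<Sum>k. f k t) has_integral J') {a..b}" and "I' \<longlonglongrightarrow> J'"
    by (rule uniform_limit_integral) auto
  moreover have "I' = (\<lambda>n. \<Sum>k<n. I k)"
  proof
    fix n
    have "((\<lambda>t. \<Sum>k<n. f k t) has_integral (\<Sum>k<n. I k)) {a..b}"
      using integral by (intro has_integral_sum) auto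
    with I'[of n] show "I' n = (\<Sum>k<n. I k)" by (rule has_integral_unique)
  qed
  moreover have "J' = J" using J' integral_sum by (rule has_integral_unique)
  ultimately show ?thesis by (simp add: sums_def)
qed

lemma t_mult_one_minus_t_squared_le:
  fixes t :: real
  assumes "0 \<le> t" "t \<le> 1"
  shows "t * (1 - t) ^ 2 \<le> 4 / 27"
proof -
  have "4 - 27 * (t * (1 - t) ^ 2) = (1 - 3 * t) ^ 2 * (4 - 3 * t)"
    by (simp add: algebra_simps power2_eq_square)
  moreover have "(1 - 3 * t) ^ 2 * (4 - 3 * t) \<ge> 0" using assms by simp
  ultimately show ?thesis by linarith
qed

(* The closed form of sum_k (a k + b) (3k + 1) y^k at y = u t (1 - t)^2. *)

definition binom3_integrand :: "real \<Rightarrow> real \<Rightarrow> real \<Rightarrow> real \<Rightarrow> real" where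
  "binom3_integrand u a b t = (let y = u * t * (1 - t) ^ 2 in
     3 * a * y * (1 + y) / (1 - y) ^ 3 + (a + 3 * b) * y / (1 - y) ^ 2 + b / (1 - y))"

lemma sums_div_binomial_3k:
  fixes u a b :: real and G :: "real \<Rightarrow> real"
  assumes u: "\<bar>u\<bar> < 27 / 4"
    and G: "\<And>t. t \<in> {0..1} \<Longrightarrow>
      (G has_real_derivative binom3_integrand u a b t) (at t within {0..1})"
  shows "(\<lambda>k. (a * real k + b) * u ^ k / real ((3 * k) choose k)) sums (G 1 - G 0)"
proof -
  define f where "f k t = (3 * a * real k ^ 2 + (a + 3 * b) * real k + b) * (u * t * (1 - t) ^ 2) ^ k"
    for k t
  define r where "r = \<bar>u\<bar> * 4 / 27"
  define M where
    "M k = (3 * \<bar>a\<bar> * real k ^ 2 + (\<bar>a\<bar> + 3 * \<bar>b\<bar>) * real k + \<bar>b\<bar>) * r ^ k" for k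
  have r: "0 \<le> r" "r < 1" using u by (auto simp: r_def)
  have y_le: "\<bar>u * t * (1 - t) ^ 2\<bar> \<le> r" if "t \<in> {0..1}" for t
  proof -
    have "\<bar>u * t * (1 - t) ^ 2\<bar> = \<bar>u\<bar> * (t * (1 - t) ^ 2)"
      using that by (simp add: abs_mult)
    also have "\<dots> \<le> \<bar>u\<bar> * (4 / 27)"
      using that t_mult_one_minus_t_squared_le[of t] by (intro mult_left_mono) auto
    finally show ?thesis by (simp add: r_def)
  qed
  have "\<bar>f k t\<bar> \<le> M k" if "t \<in> {0..1}" for k t
  proof -
    have "\<bar>3 * a * real k ^ 2 + (a + 3 * b) * real k + b\<bar>
        \<le> \<bar>3 * a * real k ^ 2\<bar> + \<bar>(a + 3 * b) * real k\<bar> + \<bar>b\<bar>" by linarith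
    also have "\<dots> \<le> 3 * \<bar>a\<bar> * real k ^ 2 + (\<bar>a\<bar> + 3 * \<bar>b\<bar>) * real k + \<bar>b\<bar>"
      by (simp add: abs_mult mult_right_mono)
    finally show ?thesis
      unfolding f_def M_def abs_mult power_abs using y_le[OF that] r
      by (intro mult_mono power_mono) auto
  qed
  moreover have "summable M"
    using sums_quadratic_times_power[of r "3 * \<bar>a\<bar>" "\<bar>a\<bar> + 3 * \<bar>b\<bar>" "\<bar>b\<bar>"] r
    unfolding M_def by (auto simp: sums_iff)
  moreover have "continuous_on {0..1} (f k)" for k
    unfolding f_def by (intro continuous_intros)
  moreover have "(f k has_integral (a * real k + b) * u ^ k / real ((3 * k) choose k)) {0..1}" for k
  proof -
    have "f k = (\<lambda>t. (a * real k + b) * u ^ k * ((3 * real k + 1) * (t * (1 - t) ^ 2) ^ k))"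
      by (simp add: fun_eq_iff f_def power_mult_distrib mult.assoc[symmetric] power2_eq_square)
        (simp add: algebra_simps)
    then show ?thesis
      using has_integral_mult_right[OF inverse_binomial_3k_has_integral, of "(a * real k + b) * u ^ k"]
      by simp
  qed
  moreover have "((\<lambda>t. \<Sum>k. f k t) has_integral G 1 - G 0) {0..1}"
  proof -
    have sum_f: "(\<Sum>k. f k t) = binom3_integrand u a b t" if "t \<in> {0..1}" for t
    proof -
      have "\<bar>u * t * (1 - t) ^ 2\<bar> < 1" using y_le[OF that] r by linarith
      from sums_quadratic_times_power[OF this, of "3 * a" "a + 3 * b" b]
      show ?thesis unfolding f_def binom3_integrand_def Let_def by (simp add: sums_iff)
    qed
    have "(binom3_integrand u a b has_integral G 1 - G 0) {0..1}"
      using G by (intro fundamental_theorem_of_calculus)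
        (auto simp: has_real_derivative_iff_has_vector_derivative[symmetric])
    then show ?thesis by (rule has_integral_eq[rotated]) (simp add: sum_f)
  qed
  ultimately show ?thesis by (rule sums_integrals_of_dominated_series)
qed

(* For u = x^3 / (x - 1) one has (x - 1) (1 - u t (1 - t)^2) = cubic_den x t. *)

definition cubic_den :: "real \<Rightarrow> real \<Rightarrow> real" where
  "cubic_den x t = (x - 1) - x ^ 3 * t * (1 - t) ^ 2"

definition quadratic_factor :: "real \<Rightarrow> real \<Rightarrow> real" where
  "quadratic_factor x t = x ^ 2 * t ^ 2 - x * (x + 1) * t + 1"

lemma cubic_den_factor: "cubic_den x t = - ((1 - x + x * t) * quadratic_factor x t)"
  unfolding cubic_den_def quadratic_factor_def by algebra

lemma four_quadratic_factor:
  "4 * quadratic_factor x t = (1 - x) * (3 + x) + (2 * x * t - x - 1) ^ 2"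
  unfolding quadratic_factor_def by algebra

lemma linear_factor_pos:
  fixes x t :: real
  assumes "x < 1" "0 \<le> t" "t \<le> 1"
  shows "0 < 1 - x + x * t"
proof (cases "x \<ge> 0")
  case True
  then show ?thesis using assms by (smt (verit) mult_nonneg_nonneg)
next
  case False
  then have "x * (1 - t) \<le> 0" using assms by (simp add: mult_nonpos_nonneg)
  then show ?thesis by (simp add: algebra_simps)
qed

lemma quadratic_factor_pos:
  fixes x t :: real
  assumes "-3 < x" "x < 1"
  shows "0 < quadratic_factor x t"
proof -
  have "0 < (1 - x) * (3 + x)" using assms by simp
  then have "0 < 4 * quadratic_factor x t"
    unfolding four_quadratic_factor by (smt (verit) zero_le_power2)
  then show ?thesis by simp
qed

lemma cubic_den_neg:
  fixes x t :: real
  assumes "-3 < x" "x < 1" "0 \<le> t" "t \<le> 1"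
  shows "cubic_den x t < 0"
  unfolding cubic_den_factor using linear_factor_pos[of x t] quadratic_factor_pos[of x t] assms by simp

lemma binom3_integrand_cube_ratio:
  fixes x t a b :: real
  defines "Y \<equiv> x ^ 3 * t * (1 - t) ^ 2"
  assumes x: "x \<noteq> 1" and den: "cubic_den x t \<noteq> 0"
  shows "binom3_integrand (x ^ 3 / (x - 1)) a b t
    = (x - 1) * (3 * a * Y * (x - 1 + Y) + (a + 3 * b) * Y * cubic_den x t
        + b * cubic_den x t ^ 2) / cubic_den x t ^ 3"
proof -
  define m z where "m = x - 1" and "z = cubic_den x t"
  have m: "m \<noteq> 0" and z: "z \<noteq> 0" using x den by (simp_all add: m_def z_def)
  have "x ^ 3 / (x - 1) * t * (1 - t) ^ 2 = Y / m" by (simp add: Y_def m_def)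
  moreover have "1 - Y / m = z / m" using m by (simp add: field_simps m_def z_def Y_def cubic_den_def)
  ultimately have "binom3_integrand (x ^ 3 / (x - 1)) a b t
      = 3 * a * (Y / m) * (1 + Y / m) / (z / m) ^ 3 + (a + 3 * b) * (Y / m) / (z / m) ^ 2 + b / (z / m)"
    unfolding binom3_integrand_def Let_def by simp
  also have "\<dots> = m * (3 * a * Y * (m + Y) + (a + 3 * b) * Y * z + b * z ^ 2) / z ^ 3"
    using m z by (simp add: field_simps power2_eq_square power3_eq_cube)
  finally show ?thesis by (simp add: m_def z_def)
qed

lemma has_real_derivative_sum_power_Suc:
  "((\<lambda>t. \<Sum>i<n. c i * t ^ Suc i) has_real_derivative (\<Sum>i<n. real (Suc i) * c i * t ^ i))
    (at t within S)"
proof (rule DERIV_sum)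
  fix i
  show "((\<lambda>t. c i * t ^ Suc i) has_real_derivative real (Suc i) * c i * t ^ i) (at t within S)"
    using DERIV_cmult[OF DERIV_pow[of "Suc i"], of "c i"] by (simp add: mult_ac)
qed

definition log_coeffs :: "real \<Rightarrow> real list" where
  "log_coeffs x =
    [(x - 1) * (-81 + 243*x - 189*x^2 + 81*x^3 - 48*x^4 - 2*x^5),
     x^3 * (486 - 1128*x + 694*x^2 + 2*x^3 - 96*x^4 + 14*x^5),
     x^3 * (-756 + 1836*x - 1188*x^2 - 108*x^3 + 396*x^4 - 60*x^5),
     x^3 * (324 - 810*x + 540*x^2 + 270*x^3 - 612*x^4 + 96*x^5),
     x^6 * (-216 + 420*x - 68*x^2),
     x^6 * (54 - 108*x + 18*x^2)]"

definition log_numerator :: "real \<Rightarrow> real \<Rightarrow> real" where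
  "log_numerator x t = (x - 1) * (\<Sum>i<6. log_coeffs x ! i * t ^ Suc i)"

(* Over the common denominator cubic_den^3, the numerators of the derivative of log_antiderivative
   (right) and of binom3_integrand (left, cf. binom3_integrand_cube_ratio) agree. *)

lemma log_numerator_identity:
  fixes x t :: real
  defines "Y \<equiv> x ^ 3 * t * (1 - t) ^ 2" and "D \<equiv> cubic_den x t"
  shows "(x - 1) * (3 * s_fun x * Y * (x - 1 + Y) + (s_fun x + 3 * t_fun x) * Y * D + t_fun x * D ^ 2)
    = (x - 1) * (\<Sum>i<6. real (Suc i) * log_coeffs x ! i * t ^ i) * D
      + 2 * log_numerator x t * x ^ 3 * (1 - t) * (1 - 3 * t)
      + 4 * x ^ 2 * (1 - x) * D ^ 2
        * (2 * x * quadratic_factor x t - (2 * x ^ 2 * t - x * (x + 1)) * (1 - x + x * t))"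
  unfolding Y_def D_def log_numerator_def log_coeffs_def cubic_den_def quadratic_factor_def
    s_fun_def t_fun_def
  by (simp add: eval_nat_numeral) algebra

definition log_antiderivative :: "real \<Rightarrow> real \<Rightarrow> real" where
  "log_antiderivative x t = log_numerator x t / cubic_den x t ^ 2
     - 8 * x ^ 2 * (1 - x) * ln (1 - x + x * t) + 4 * x ^ 2 * (1 - x) * ln (quadratic_factor x t)"

lemma has_real_derivative_cubic_den:
  "(cubic_den x has_real_derivative (- (x ^ 3 * (1 - t) * (1 - 3 * t)))) (at t within S)"
  unfolding cubic_den_def[abs_def]
  by (rule derivative_eq_intros refl)+ (simp add: eval_nat_numeral; algebra)

lemma has_real_derivative_quadratic_factor:
  "(quadratic_factor x has_real_derivative (2 * x ^ 2 * t - x * (x + 1))) (at t within S)"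
  unfolding quadratic_factor_def[abs_def]
  by (rule derivative_eq_intros refl)+ (simp add: eval_nat_numeral; algebra)

lemma has_real_derivative_log_numerator:
  "(log_numerator x has_real_derivative (x - 1) * (\<Sum>i<6. real (Suc i) * log_coeffs x ! i * t ^ i))
    (at t within S)"
  unfolding log_numerator_def[abs_def] by (intro DERIV_cmult has_real_derivative_sum_power_Suc)

lemma has_real_derivative_log_antiderivative:
  fixes x t :: real
  assumes "-3 < x" "x < 1" "0 \<le> t" "t \<le> 1"
  shows "(log_antiderivative x has_real_derivative
      binom3_integrand (x ^ 3 / (x - 1)) (s_fun x) (t_fun x) t) (at t within S)"
proof -
  define D dD N dN L q dq where "D = cubic_den x t" and "dD = - (x ^ 3 * (1 - t) * (1 - 3 * t))"
    and "N = log_numerator x t" and "dN = (x - 1) * (\<Sum>i<6. real (Suc i) * log_coeffs x ! i * t ^ i)"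
    and "L = 1 - x + x * t" and "q = quadratic_factor x t" and "dq = 2 * x ^ 2 * t - x * (x + 1)"
  have "0 < L" "0 < q" "D < 0"
    using linear_factor_pos quadratic_factor_pos cubic_den_neg assms by (simp_all add: L_def q_def D_def)
  have D_factor: "D = - (L * q)" by (simp add: D_def L_def q_def cubic_den_factor)
  have "(log_antiderivative x has_real_derivative
      (dN * D ^ 2 - N * (2 * D * dD)) / (D ^ 2) ^ 2 - 8 * x ^ 2 * (1 - x) * (x / L)
        + 4 * x ^ 2 * (1 - x) * (dq / q)) (at t within S)"
    unfolding log_antiderivative_def[abs_def] D_def dD_def N_def dN_def L_def q_def dq_def
    using \<open>0 < L\<close> \<open>0 < q\<close> \<open>D < 0\<close>
    by (auto intro!: derivative_eq_intros has_real_derivative_log_numerator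
        has_real_derivative_cubic_den has_real_derivative_quadratic_factor
        simp: L_def q_def D_def mult_ac)
  moreover have "(dN * D ^ 2 - N * (2 * D * dD)) / (D ^ 2) ^ 2 - 8 * x ^ 2 * (1 - x) * (x / L)
        + 4 * x ^ 2 * (1 - x) * (dq / q)
      = (dN * D + 2 * N * x ^ 3 * (1 - t) * (1 - 3 * t)
          + 4 * x ^ 2 * (1 - x) * D ^ 2 * (2 * x * q - dq * L)) / D ^ 3"
    unfolding D_factor dD_def using \<open>0 < L\<close> \<open>0 < q\<close>
    by (simp add: field_simps power2_eq_square power3_eq_cube)
  moreover have "\<dots> = binom3_integrand (x ^ 3 / (x - 1)) (s_fun x) (t_fun x) t"
    unfolding D_def N_def dN_def L_def q_def dq_def log_numerator_identity[symmetric]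
    using binom3_integrand_cube_ratio[of x t] \<open>D < 0\<close> assms by (simp add: D_def)
  ultimately show ?thesis by simp
qed

definition arctan_coeffs :: "real \<Rightarrow> real list" where
  "arctan_coeffs x =
    [(x - 1) * (-27 + 27*x^2 + 18*x^3 - 2*x^4),
     x^3 * (162 - 110*x - 52*x^2 + 18*x^3 + 14*x^4),
     x^3 * (-252 + 144*x + 108*x^2 - 72*x^3 - 60*x^4),
     x^3 * (108 - 54*x - 54*x^2 + 108*x^3 + 96*x^4),
     x^6 * (-72 - 68*x),
     18 * x^6 * (x + 1)]"

definition arctan_numerator :: "real \<Rightarrow> real \<Rightarrow> real" where
  "arctan_numerator x t = (x - 1) * (\<Sum>i<6. arctan_coeffs x ! i * t ^ Suc i)"

lemma arctan_numerator_identity: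
  fixes x t :: real
  defines "Y \<equiv> x ^ 3 * t * (1 - t) ^ 2" and "D \<equiv> cubic_den x t"
  shows "(x + 3) ^ 2 * ((x - 1) * (3 * (2 * x - 3) ^ 2 * Y * (x - 1 + Y)
        + ((2 * x - 3) ^ 2 + 3 * (2 * x ^ 2 + 2 * x - 3)) * Y * D + (2 * x ^ 2 + 2 * x - 3) * D ^ 2))
    = (x - 1) * (\<Sum>i<6. real (Suc i) * arctan_coeffs x ! i * t ^ i) * D
      + 2 * arctan_numerator x t * x ^ 3 * (1 - t) * (1 - 3 * t)
      + 4 * x ^ 3 * (1 - x) * D ^ 2 * (1 - x + x * t)"
  unfolding Y_def D_def arctan_numerator_def arctan_coeffs_def cubic_den_def
  by (simp add: eval_nat_numeral) algebra

definition arctan_antiderivative :: "real \<Rightarrow> real \<Rightarrow> real" where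
  "arctan_antiderivative x t = (arctan_numerator x t / cubic_den x t ^ 2
     + 8 * x ^ 2 * (x - 1) / sqrt ((1 - x) * (3 + x))
       * arctan ((2 * x * t - x - 1) / sqrt ((1 - x) * (3 + x)))) / (x + 3) ^ 2"

lemma has_real_derivative_arctan_numerator:
  "(arctan_numerator x has_real_derivative
      (x - 1) * (\<Sum>i<6. real (Suc i) * arctan_coeffs x ! i * t ^ i)) (at t within S)"
  unfolding arctan_numerator_def[abs_def] by (intro DERIV_cmult has_real_derivative_sum_power_Suc)

lemma has_real_derivative_arctan_quadratic:
  fixes x t :: real
  assumes "-3 < x" "x < 1"
  shows "((\<lambda>t. arctan ((2 * x * t - x - 1) / sqrt ((1 - x) * (3 + x)))) has_real_derivative
      x * sqrt ((1 - x) * (3 + x)) / (2 * quadratic_factor x t)) (at t within S)"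
proof -
  define s where "s = sqrt ((1 - x) * (3 + x))"
  have "0 < s" using assms by (simp add: s_def)
  have s2: "s ^ 2 = (1 - x) * (3 + x)" using assms by (simp add: s_def)
  have "((\<lambda>t. arctan ((2 * x * t - x - 1) / s)) has_real_derivative
      inverse (1 + ((2 * x * t - x - 1) / s) ^ 2) * (2 * x / s)) (at t within S)"
    using \<open>0 < s\<close> by (intro DERIV_chain2[OF DERIV_arctan]) (auto intro!: derivative_eq_intros)
  moreover have "1 + ((2 * x * t - x - 1) / s) ^ 2 = 4 * quadratic_factor x t / s ^ 2"
    unfolding four_quadratic_factor s2[symmetric] using \<open>0 < s\<close> by (simp add: field_simps)
  then have "inverse (1 + ((2 * x * t - x - 1) / s) ^ 2) * (2 * x / s)
      = x * s / (2 * quadratic_factor x t)"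
    using \<open>0 < s\<close> by (simp add: field_simps power2_eq_square)
  ultimately show ?thesis by (simp add: s_def)
qed

lemma has_real_derivative_arctan_antiderivative:
  fixes x t :: real
  assumes "-3 < x" "x < 1" "0 \<le> t" "t \<le> 1"
  shows "(arctan_antiderivative x has_real_derivative
      binom3_integrand (x ^ 3 / (x - 1)) ((2 * x - 3) ^ 2) (2 * x ^ 2 + 2 * x - 3) t) (at t within S)"
proof -
  define D dD N dN L q s where "D = cubic_den x t" and "dD = - (x ^ 3 * (1 - t) * (1 - 3 * t))"
    and "N = arctan_numerator x t"
    and "dN = (x - 1) * (\<Sum>i<6. real (Suc i) * arctan_coeffs x ! i * t ^ i)"
    and "L = 1 - x + x * t" and "q = quadratic_factor x t" and "s = sqrt ((1 - x) * (3 + x))"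
  have "0 < L" "0 < q" "D < 0" "0 < s"
    using linear_factor_pos quadratic_factor_pos cubic_den_neg assms
    by (simp_all add: L_def q_def D_def s_def)
  have D_factor: "D = - (L * q)" by (simp add: D_def L_def q_def cubic_den_factor)
  have "((\<lambda>t. arctan_numerator x t / cubic_den x t ^ 2) has_real_derivative
      (dN * D ^ 2 - N * (2 * D * dD)) / (D ^ 2) ^ 2) (at t within S)"
    unfolding D_def dD_def N_def dN_def using \<open>D < 0\<close>
    by (auto intro!: derivative_eq_intros has_real_derivative_arctan_numerator
        has_real_derivative_cubic_den simp: D_def mult_ac)
  moreover have "((\<lambda>t. 8 * x ^ 2 * (x - 1) / s * arctan ((2 * x * t - x - 1) / s))
      has_real_derivative 8 * x ^ 2 * (x - 1) / s * (x * s / (2 * q))) (at t within S)"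
    unfolding s_def q_def by (intro DERIV_cmult has_real_derivative_arctan_quadratic assms)
  ultimately have "(arctan_antiderivative x has_real_derivative
      ((dN * D ^ 2 - N * (2 * D * dD)) / (D ^ 2) ^ 2
        + 8 * x ^ 2 * (x - 1) / s * (x * s / (2 * q))) / (x + 3) ^ 2) (at t within S)"
    unfolding arctan_antiderivative_def[abs_def] s_def by (intro DERIV_cdivide DERIV_add)
  moreover have "(dN * D ^ 2 - N * (2 * D * dD)) / (D ^ 2) ^ 2
        + 8 * x ^ 2 * (x - 1) / s * (x * s / (2 * q))
      = (dN * D + 2 * N * x ^ 3 * (1 - t) * (1 - 3 * t) + 4 * x ^ 3 * (1 - x) * D ^ 2 * L) / D ^ 3"
    unfolding D_factor dD_def using \<open>0 < L\<close> \<open>0 < q\<close> \<open>0 < s\<close>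
    by (simp add: field_simps power2_eq_square power3_eq_cube)
  moreover have "\<dots> / (x + 3) ^ 2
      = binom3_integrand (x ^ 3 / (x - 1)) ((2 * x - 3) ^ 2) (2 * x ^ 2 + 2 * x - 3) t"
    unfolding D_def N_def dN_def L_def arctan_numerator_identity[symmetric]
    using binom3_integrand_cube_ratio[of x t] \<open>D < 0\<close> assms by (simp add: D_def)
  ultimately show ?thesis by simp
qed

lemma cos_arctan_diff:
  "cos (arctan a - arctan b) = (1 + a * b) / (sqrt (1 + a ^ 2) * sqrt (1 + b ^ 2))"
  by (simp add: cos_diff cos_arctan sin_arctan add_divide_distrib)

lemma tan_arctan_diff:
  assumes "1 + a * b \<noteq> 0"
  shows "tan (arctan a - arctan b) = (a - b) / (1 + a * b)"
proof -
  have "0 < 1 + a ^ 2" "0 < 1 + b ^ 2" by (simp_all add: add_pos_nonneg)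
  then have "cos (arctan a - arctan b) \<noteq> 0" using assms by (simp add: cos_arctan_diff)
  then show ?thesis by (simp add: tan_diff tan_arctan)
qed

lemma cos_pos_imp_less_pi_half:
  fixes \<theta> :: real
  assumes "-pi < \<theta>" "\<theta> < pi" "0 < cos \<theta>"
  shows "-(pi / 2) < \<theta>" "\<theta> < pi / 2"
proof -
  show "\<theta> < pi / 2"
  proof (rule ccontr)
    assume "\<not> \<theta> < pi / 2"
    then have "0 \<le> sin (\<theta> - pi / 2)" using assms by (intro sin_ge_zero) auto
    then show False using assms by (simp add: sin_diff)
  qed
  show "-(pi / 2) < \<theta>"
  proof (rule ccontr)
    assume "\<not> -(pi / 2) < \<theta>"
    then have "0 \<le> sin (-(\<theta> + pi / 2))" using assms by (intro sin_ge_zero) auto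
    moreover have "sin (-(\<theta> + pi / 2)) = - cos \<theta>" unfolding sin_minus by (simp add: sin_add)
    ultimately show False using assms by simp
  qed
qed

lemma arctan_diff_bounds: "-pi < arctan a - arctan b" "arctan a - arctan b < pi"
  using arctan_bounded[of a] arctan_bounded[of b] by linarith+

lemma arctan_diff_eq_arctan:
  assumes "0 < 1 + a * b"
  shows "arctan a - arctan b = arctan ((a - b) / (1 + a * b))"
proof -
  have "0 < cos (arctan a - arctan b)"
    using assms by (simp add: cos_arctan_diff add_pos_nonneg)
  note range = cos_pos_imp_less_pi_half[OF arctan_diff_bounds this]
  show ?thesis
    using range tan_arctan_diff[of a b] assms by (intro arctan_unique[symmetric]) auto
qed

lemma arctan_diff_eq_arctan_minus_pi:
  assumes "1 + a * b < 0" "a < b"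
  shows "arctan a - arctan b = arctan ((a - b) / (1 + a * b)) - pi"
proof -
  let ?\<theta> = "arctan a - arctan b + pi"
  have "arctan a - arctan b < 0" using assms(2) by (simp add: arctan_less_iff)
  then have "-pi < ?\<theta>" "?\<theta> < pi" using arctan_diff_bounds[of a b] by linarith+
  moreover have "0 < cos ?\<theta>"
    using assms(1) by (simp add: cos_arctan_diff divide_neg_pos add_pos_nonneg)
  ultimately have "-(pi / 2) < ?\<theta>" "?\<theta> < pi / 2" by (rule cos_pos_imp_less_pi_half)+
  moreover have "tan ?\<theta> = (a - b) / (1 + a * b)"
    using assms(1) by (simp add: tan_periodic_pi tan_arctan_diff)
  ultimately have "arctan ((a - b) / (1 + a * b)) = ?\<theta>" by (intro arctan_unique) auto
  then show ?thesis by simp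
qed

lemma arctan_diff_eq_minus_pi_half:
  assumes "1 + a * b = 0" "a < b"
  shows "arctan a - arctan b = - (pi / 2)"
proof -
  let ?\<theta> = "arctan a - arctan b + pi / 2"
  have "arctan a - arctan b < 0" using assms(2) by (simp add: arctan_less_iff)
  then have "-pi < ?\<theta>" "?\<theta> < pi" using arctan_diff_bounds[of a b] by linarith+
  moreover have "sin ?\<theta> = 0"
    using assms(1) cos_arctan_diff[of a b] by (simp add: sin_add)
  ultimately have "?\<theta> = 0" by (rule sin_eq_0_pi)
  then show ?thesis by linarith
qed

lemma arctan_diff_eq_q_fun:
  fixes x :: real
  assumes "-3 < x" "x < 1"
  shows "arctan ((x - 1) / sqrt ((1 - x) * (3 + x))) - arctan (- (x + 1) / sqrt ((1 - x) * (3 + x)))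
    = q_fun x"
proof -
  define s where "s = sqrt ((1 - x) * (3 + x))"
  have "0 < s" using assms by (simp add: s_def)
  have s2: "s * s = (1 - x) * (3 + x)" using assms by (simp add: s_def)
  define a b where "a = (x - 1) / s" and "b = - (x + 1) / s"
  have "1 + a * b = (s * s - (x - 1) * (x + 1)) / (s * s)"
    unfolding a_def b_def using \<open>0 < s\<close> by (simp add: field_simps)
  also have "s * s - (x - 1) * (x + 1) = 2 * (1 - x) * (2 + x)" unfolding s2 by algebra
  finally have ab: "1 + a * b = 2 * (1 - x) * (2 + x) / (s * s)" .
  have quotient: "(a - b) / (1 + a * b) = x / (x + 2) * sqrt ((3 + x) / (1 - x))" if "x \<noteq> -2"
  proof -
    have "(1 - x) * (3 + x) = (1 - x) ^ 2 * ((3 + x) / (1 - x))"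
      using assms by (simp add: power2_eq_square)
    then have "s = (1 - x) * sqrt ((3 + x) / (1 - x))"
      using assms unfolding s_def by (simp only: real_sqrt_mult) simp
    then have sqrt_eq: "sqrt ((3 + x) / (1 - x)) = s / (1 - x)" using assms by simp
    have "a - b = 2 * x / s" unfolding a_def b_def by (simp add: diff_divide_distrib[symmetric])
    then have "(a - b) / (1 + a * b) = (2 * x / s) / (2 * (1 - x) * (2 + x) / (s * s))"
      by (simp only: ab)
    also have "\<dots> = x / (2 + x) * (s / (1 - x))"
    proof -
      have "(2 * x / s) / (2 * p * r / (s * s)) = x / r * (s / p)" if "p \<noteq> 0" "r \<noteq> 0" for p r
        using \<open>0 < s\<close> that by (simp add: field_simps)
      moreover have "1 - x \<noteq> 0" "2 + x \<noteq> 0" using assms that by auto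
      ultimately show ?thesis by blast
    qed
    finally show ?thesis unfolding sqrt_eq by (simp add: add.commute)
  qed
  have "a < b" if "x < 0"
    unfolding a_def b_def using that \<open>0 < s\<close> by (simp add: divide_strict_right_mono)
  consider "-2 < x" | "x = -2" | "x < -2" by linarith
  then have "arctan a - arctan b = q_fun x"
  proof cases
    case 1
    then have "0 < 1 + a * b" unfolding ab using assms \<open>0 < s\<close> by simp
    then show ?thesis using 1 assms quotient by (simp add: arctan_diff_eq_arctan q_fun_def)
  next
    case 2
    then show ?thesis using \<open>x < 0 \<Longrightarrow> a < b\<close>
      by (simp add: ab arctan_diff_eq_minus_pi_half q_fun_def)
  next
    case 3
    then have "1 + a * b < 0" unfolding ab using assms \<open>0 < s\<close>
      by (simp add: divide_neg_pos mult_pos_neg)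
    then show ?thesis using 3 assms quotient \<open>x < 0 \<Longrightarrow> a < b\<close>
      by (simp add: arctan_diff_eq_arctan_minus_pi q_fun_def)
  qed
  then show ?thesis by (simp add: a_def b_def s_def)
qed

lemma power_cube_div_eq:
  fixes x A C :: real
  shows "A * x ^ (3 * k) / ((x - 1) ^ k * C) = A * (x ^ 3 / (x - 1)) ^ k / C"
  by (simp add: power_divide power_mult)

lemma sums_log_series:
  fixes x :: real
  assumes "-3 < x" "x < 1" "\<bar>x ^ 3 / (x - 1)\<bar> < 27 / 4"
  shows "(\<lambda>k. ((s_fun x * real k + t_fun x) * x ^ (3 * k))
      / ((x - 1) ^ k * real ((3 * k) choose k)))
    sums (12 * x ^ 2 * (1 - x) * ln (1 - x) - 27 * (1 - x) * (x ^ 2 - 6 * x + 3))"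
proof -
  have "(\<lambda>k. (s_fun x * real k + t_fun x) * (x ^ 3 / (x - 1)) ^ k / real ((3 * k) choose k))
      sums (log_antiderivative x 1 - log_antiderivative x 0)"
    using assms by (intro sums_div_binomial_3k has_real_derivative_log_antiderivative) auto
  moreover have "log_antiderivative x 1 - log_antiderivative x 0
      = 12 * x ^ 2 * (1 - x) * ln (1 - x) - 27 * (1 - x) * (x ^ 2 - 6 * x + 3)"
  proof -
    have "log_numerator x 1 = (x - 1) ^ 2 * (27 * (x - 1) * (x ^ 2 - 6 * x + 3))"
      unfolding log_numerator_def log_coeffs_def by (simp add: eval_nat_numeral) algebra
    moreover have "cubic_den x 1 = x - 1" by (simp add: cubic_den_def)
    ultimately have N1:
      "log_numerator x 1 / cubic_den x 1 ^ 2 = 27 * (x - 1) * (x ^ 2 - 6 * x + 3)"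
      using assms(2) by simp
    have N0: "log_numerator x 0 = 0" by (simp add: log_numerator_def)
    have q1: "quadratic_factor x 1 = 1 - x" and q0: "quadratic_factor x 0 = 1"
      by (simp_all add: quadratic_factor_def power2_eq_square algebra_simps)
    show ?thesis
      unfolding log_antiderivative_def N1 N0 q1 q0 by (simp add: algebra_simps)
  qed
  ultimately show ?thesis by (simp add: power_cube_div_eq)
qed

lemma sums_arctan_series:
  fixes x :: real
  assumes "-3 < x" "x < 1" "\<bar>x ^ 3 / (x - 1)\<bar> < 27 / 4"
  shows "(\<lambda>n. let k = Suc n in
            (((2*x - 3)^2 * real k + 2*x^2 + 2*x - 3) * x^(3*k))
            / ((x - 1)^k * real ((3*k) choose k)))
    sums (-2 * x^3 * (x + 7) / (x + 3)^2
          + 8 * x^2 * (x - 1) * q_fun x / ((x + 3)^2 * sqrt ((1 - x) * (3 + x))))"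
proof -
  define f where "f k = ((2 * x - 3) ^ 2 * real k + (2 * x ^ 2 + 2 * x - 3)) * (x ^ 3 / (x - 1)) ^ k
    / real ((3 * k) choose k)" for k
  have "f sums (arctan_antiderivative x 1 - arctan_antiderivative x 0)"
    unfolding f_def using assms
    by (intro sums_div_binomial_3k has_real_derivative_arctan_antiderivative) auto
  moreover have "arctan_antiderivative x 1 - arctan_antiderivative x 0
      = (-2 * x^3 * (x + 7) / (x + 3)^2
          + 8 * x^2 * (x - 1) * q_fun x / ((x + 3)^2 * sqrt ((1 - x) * (3 + x)))) + f 0"
  proof -
    define s where "s = sqrt ((1 - x) * (3 + x))"
    have "0 < s" using assms by (simp add: s_def)
    have "arctan_numerator x 1
        = (x - 1) ^ 2 * (-2 * x ^ 3 * (x + 7) + (2 * x ^ 2 + 2 * x - 3) * (x + 3) ^ 2)"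
      unfolding arctan_numerator_def arctan_coeffs_def by (simp add: eval_nat_numeral) algebra
    moreover have "cubic_den x 1 = x - 1" by (simp add: cubic_den_def)
    ultimately have N1: "arctan_numerator x 1 / cubic_den x 1 ^ 2
        = -2 * x ^ 3 * (x + 7) + (2 * x ^ 2 + 2 * x - 3) * (x + 3) ^ 2"
      using assms(2) by simp
    have N0: "arctan_numerator x 0 = 0" by (simp add: arctan_numerator_def)
    have "arctan_antiderivative x 1 - arctan_antiderivative x 0
        = (arctan_numerator x 1 / cubic_den x 1 ^ 2 + 8 * x ^ 2 * (x - 1) / s
            * (arctan ((x - 1) / s) - arctan (- (x + 1) / s))) / (x + 3) ^ 2"
    proof -
      have "2 * x * 1 - x - 1 = x - 1" "2 * x * 0 - x - 1 = - (x + 1)" by simp_all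
      then show ?thesis unfolding arctan_antiderivative_def N0 s_def[symmetric]
        using assms(1) \<open>0 < s\<close> by (simp only:) (simp add: field_simps)
    qed
    also have "\<dots> = (-2 * x ^ 3 * (x + 7) + (2 * x ^ 2 + 2 * x - 3) * (x + 3) ^ 2
        + 8 * x ^ 2 * (x - 1) / s * q_fun x) / (x + 3) ^ 2"
      unfolding N1 s_def arctan_diff_eq_q_fun[OF assms(1,2)] ..
    also have "\<dots> = -2 * x ^ 3 * (x + 7) / (x + 3) ^ 2
        + 8 * x ^ 2 * (x - 1) * q_fun x / ((x + 3) ^ 2 * s) + (2 * x ^ 2 + 2 * x - 3)"
      using assms(1) \<open>0 < s\<close> by (simp add: field_simps)
    finally show ?thesis by (simp add: f_def s_def)
  qed
  ultimately have "(\<lambda>n. f (Suc n)) sums (-2 * x^3 * (x + 7) / (x + 3)^2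
          + 8 * x^2 * (x - 1) * q_fun x / ((x + 3)^2 * sqrt ((1 - x) * (3 + x))))"
    by (simp add: sums_Suc_iff)
  moreover have "f (Suc n) = (let k = Suc n in
      (((2*x - 3)^2 * real k + 2*x^2 + 2*x - 3) * x^(3*k)) / ((x - 1)^k * real ((3*k) choose k)))"
    for n
    unfolding f_def Let_def power_cube_div_eq by (simp add: add_diff_eq add.assoc)
  ultimately show ?thesis by simp
qed

lemma c_const_cubic: "4 * c_const ^ 3 + 27 * c_const = 27"
proof -
  define a where "a = (1 + sqrt 2) powr (1 / 3)"
  define w where "w = a - 1 / a"
  have "0 < 1 + sqrt (2::real)" by (simp add: add_pos_nonneg)
  then have "0 < a" and a3: "a ^ 3 = 1 + sqrt 2"
    by (simp_all add: a_def powr_realpow[symmetric] powr_powr)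
  moreover have "1 / (1 + sqrt 2) = sqrt 2 - (1::real)"
  proof -
    have "(sqrt 2 - 1) * (1 + sqrt 2) = (1::real)" by (simp add: algebra_simps)
    then show ?thesis using \<open>0 < 1 + sqrt 2\<close> by (simp add: divide_eq_eq)
  qed
  ultimately have "(1 / a) ^ 3 = sqrt 2 - 1" by (simp add: power_one_over)
  moreover have "w ^ 3 + 3 * w = a ^ 3 - (1 / a) ^ 3"
    unfolding w_def using \<open>0 < a\<close> by (simp add: field_simps power3_eq_cube)
  ultimately have "w ^ 3 + 3 * w = 2" by (simp add: a3)
  moreover have c_w: "c_const = 3 / 2 * w"
    by (simp add: c_const_def w_def a_def powr_minus inverse_eq_divide)
  ultimately show ?thesis unfolding c_w by (simp add: power3_eq_cube algebra_simps)
qed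

lemma c_const_less_one: "c_const < 1"
proof (rule ccontr)
  assume "\<not> c_const < 1"
  then have "1 \<le> c_const ^ 3" by simp
  with \<open>\<not> c_const < 1\<close> c_const_cubic show False by linarith
qed

lemma abs_cube_ratio_less_of_less_c_const:
  fixes x :: real
  assumes "-3 < x" "x < c_const"
  shows "\<bar>x ^ 3 / (x - 1)\<bar> < 27 / 4"
proof -
  have "x < 1" using assms(2) c_const_less_one by linarith
  have "4 * \<bar>x\<bar> ^ 3 < 27 * (1 - x)"
  proof (cases "0 \<le> x")
    case True
    then have "x ^ 3 < c_const ^ 3" using assms by (intro power_strict_mono) auto
    then show ?thesis using True assms c_const_cubic by simp
  next
    case False
    have "0 < (x + 3) * (2 * x - 3) ^ 2" using assms False by (intro mult_pos_pos) auto
    then show ?thesis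
      using False by (simp add: abs_if power2_eq_square power3_eq_cube algebra_simps)
  qed
  then show ?thesis using \<open>x < 1\<close> by (simp add: abs_div power_abs pos_divide_less_eq)
qed

theorem theorem1p1:
  fixes x :: real
  assumes "-3 < x" and "x < c_const"
  shows "((\<lambda>n. let k = Suc n in
            (((2*x - 3)^2 * real k + 2*x^2 + 2*x - 3) * x^(3*k))
            / ((x - 1)^k * real ((3*k) choose k)))
         sums (-2 * x^3 * (x + 7) / (x + 3)^2
               + 8 * x^2 * (x - 1) * q_fun x / ((x + 3)^2 * sqrt ((1 - x) * (3 + x)))))
       \<and> ((\<lambda>k. ((s_fun x * real k + t_fun x) * x^(3*k))
            / ((x - 1)^k * real ((3*k) choose k)))
         sums (12 * x^2 * (1 - x) * ln (1 - x) - 27 * (1 - x) * (x^2 - 6*x + 3)))"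
proof -
  have "x < 1" using assms(2) c_const_less_one by linarith
  moreover have "\<bar>x ^ 3 / (x - 1)\<bar> < 27 / 4"
    using assms by (rule abs_cube_ratio_less_of_less_c_const)
  ultimately show ?thesis using assms(1) sums_arctan_series sums_log_series by blast
qed

end
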